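(* The constantly rebalanced portfolio strategy $\mathrm{CRP}$ and the constantly rebalanced portfolio strategy with side information $\mathrm{CRP}_{\mathrm{side}}$ (for any side-information vectors $\mathbf v_t$ and any function $\mathbf f$ as below) are universalizable.
   Context: Market with $m\ge2$ assets and return vectors $\mathbf x_t\in(0,\infty)^m$, $t\ge0$. $\mathcal W_m=\{\mathbf w\in[0,1]^m:\sum_i w_i=1\}$. $\mathrm{CRP}$ has parameter space $\mathcal W_m$ and description $\mathrm{CRP}_t(\mathbf w)=\mathbf w$. $\mathrm{CRP}_{\mathrm{side}}$: given $k\ge1$, side-information vectors $\mathbf v_t\in\mathbb R^{q}$ and a function $\mathbf f=(f_1,\dots,f_k):\mathbb R^q\to[0,1]^k$ with $\sum_j f_j\equiv1$, its parameter space is $\mathcal W_m^k$ and its description is $\mathrm{CRP}_{\mathrm{side},t}(\mathbf w_1,\dots,\mathbf w_k)=\sum_{j=1}^k f_j(\mathbf v_t)\mathbf w_j$. General notions: for a strategy $S$ with parameter space $\mathbb W$ (a finite product of simplices) and descriptions $S_t(\mathbf w)\in\mathcal W_m$, $\mathcal R_n(S(\mathbf w))=\prod_{t=0}^{n-1}S_t(\mathbf w)\cdot\mathbf x_t$ ($\mathcal R_0\equiv1$), $\mathcal L_n=\frac1n\log\mathcal R_n$, similarly for parameter-free strategies. $\mu$ is the uniform probability measure on $\mathbb W$ and $\mathcal U(S)$ has $\mathcal U_t(S)=\int_{\mathbb W}S_t\mathcal R_t\,d\mu/\int_{\mathbb W}\mathcal R_t\,d\mu$. $U$ is a universalization of $S$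 if there is $\eta_n\to0$, independent of market data, with $\mathcal L_n(U)\ge\sup_{\mathbf w}\mathcal L_n(S(\mathbf w))-\eta_n$ for all $n$ and all market data. The $\varepsilon$-modification is $\bar S_t(\mathbf w)=(1-\frac{\varepsilon}{2(t+1)^2})S_t(\mathbf w)+\frac{\varepsilon}{2m(t+1)^2}(1,\dots,1)$; $S$ is universalizable if for every $\varepsilon\in(0,1)$, $\mathcal U(\bar S)$ is a universalization of $S$. *)

theory Defs
  imports "HOL-Analysis.Analysis"
begin

text \<open>There are m assets, indexed by 0..m-1. A vector in R^m (portfolio or
return vector) is a function nat => real of which only the entries below m matter.
Market data is a sequence x :: nat => nat => real, x t i being the return of asset i at
time t. A parameter of a strategy with parameter space (W_m)^k is a function
w :: nat => nat => real, w j being the j-th portfolio (j < k).\<close>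

type_synonym pvec = "nat \<Rightarrow> real"
type_synonym market = "nat \<Rightarrow> pvec"
type_synonym param = "nat \<Rightarrow> pvec"

type_synonym pstrategy = "market \<Rightarrow> nat \<Rightarrow> param \<Rightarrow> pvec"
type_synonym strategy = "market \<Rightarrow> nat \<Rightarrow> pvec"

definition valid_market :: "nat \<Rightarrow> market \<Rightarrow> bool" where
  "valid_market m x \<longleftrightarrow> (\<forall>t. \<forall>i<m. x t i > 0)"

definition asset_simplex :: "nat \<Rightarrow> pvec set" where
  "asset_simplex m = {w \<in> ({..<m} \<rightarrow>\<^sub>E UNIV). (\<forall>i<m. 0 \<le> w i \<and> w i \<le> 1) \<and> (\<Sum>i<m. w i) = 1}"

definition paramspace :: "nat \<Rightarrow> nat \<Rightarrow> param set" where
  "paramspace m k = {..<k} \<rightarrow>\<^sub>E asset_simplex m"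

definition pdot :: "nat \<Rightarrow> pvec \<Rightarrow> pvec \<Rightarrow> real" where
  "pdot m b y = (\<Sum>i<m. b i * y i)"

definition wealth :: "nat \<Rightarrow> strategy \<Rightarrow> market \<Rightarrow> nat \<Rightarrow> real" where
  "wealth m U x n = (\<Prod>t<n. pdot m (U x t) (x t))"

definition growth :: "nat \<Rightarrow> strategy \<Rightarrow> market \<Rightarrow> nat \<Rightarrow> real" where
  "growth m U x n = ln (wealth m U x n) / real n"

definition fix_param :: "pstrategy \<Rightarrow> param \<Rightarrow> strategy" where
  "fix_param S w = (\<lambda>x t. S x t w)"

text \<open>Uniform probability measure on (W_m)^k: the free coordinates y(j,i), j<k, i<m-1,
are uniformly distributed (w.r.t. Lebesgue measure) on the product of the sets
{y >= 0, sum y <= 1}; the last coordinate is 1 minus the sum of the others.\<close>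
definition free_coords :: "nat \<Rightarrow> nat \<Rightarrow> (nat \<times> nat) set" where
  "free_coords m k = {..<k} \<times> {..<m - 1}"

definition lebesgue_coords :: "nat \<Rightarrow> nat \<Rightarrow> (nat \<times> nat \<Rightarrow> real) measure" where
  "lebesgue_coords m k = PiM (free_coords m k) (\<lambda>_. lborel)"

definition coord_domain :: "nat \<Rightarrow> nat \<Rightarrow> (nat \<times> nat \<Rightarrow> real) set" where
  "coord_domain m k = {y \<in> space (lebesgue_coords m k).
      \<forall>j<k. (\<forall>i<m - 1. 0 \<le> y (j, i)) \<and> (\<Sum>i<m - 1. y (j, i)) \<le> 1}"

definition coords_to_param :: "nat \<Rightarrow> nat \<Rightarrow> (nat \<times> nat \<Rightarrow> real) \<Rightarrow> param" where
  "coords_to_param m k y = (\<lambda>j\<in>{..<k}. \<lambda>i\<in>{..<m}.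
      if i < m - 1 then y (j, i) else 1 - (\<Sum>i'<m - 1. y (j, i')))"

definition param_measure :: "nat \<Rightarrow> nat \<Rightarrow> param measure" where
  "param_measure m k =
     distr (uniform_measure (lebesgue_coords m k) (coord_domain m k))
           (PiM {..<k} (\<lambda>_. PiM {..<m} (\<lambda>_. lborel)))
           (coords_to_param m k)"

definition univ :: "nat \<Rightarrow> nat \<Rightarrow> pstrategy \<Rightarrow> strategy" where
  "univ m k S = (\<lambda>x t i.
      (\<integral>w. S x t w i * wealth m (fix_param S w) x t \<partial>param_measure m k) /
      (\<integral>w. wealth m (fix_param S w) x t \<partial>param_measure m k))"

definition universalization :: "nat \<Rightarrow> nat \<Rightarrow> strategy \<Rightarrow> pstrategy \<Rightarrow> bool" where
  "universalization m k U S \<longleftrightarrow>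
     (\<exists>\<eta> :: nat \<Rightarrow> real. \<eta> \<longlonglongrightarrow> 0 \<and>
        (\<forall>n\<ge>1. \<forall>x. valid_market m x \<longrightarrow>
           (\<forall>w\<in>paramspace m k. growth m U x n \<ge> growth m (fix_param S w) x n - \<eta> n)))"

definition eps_mod :: "nat \<Rightarrow> real \<Rightarrow> pstrategy \<Rightarrow> pstrategy" where
  "eps_mod m \<epsilon> S = (\<lambda>x t w i.
      (1 - \<epsilon> / (2 * (real t + 1)^2)) * S x t w i + \<epsilon> / (2 * real m * (real t + 1)^2))"

definition universalizable :: "nat \<Rightarrow> nat \<Rightarrow> pstrategy \<Rightarrow> bool" where
  "universalizable m k S \<longleftrightarrow>
     (\<forall>\<epsilon>. 0 < \<epsilon> \<and> \<epsilon> < 1 \<longrightarrow> universalization m k (univ m k (eps_mod m \<epsilon> S)) S)"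

text \<open>CRP (parameter space W_m, i.e. k = 1) and CRP with side information
(parameter space (W_m)^k).\<close>
definition CRP :: pstrategy where
  "CRP = (\<lambda>x t w. w 0)"

definition CRP_side :: "nat \<Rightarrow> (nat \<Rightarrow> real^'q) \<Rightarrow> (real^'q \<Rightarrow> nat \<Rightarrow> real) \<Rightarrow> pstrategy" where
  "CRP_side k v f = (\<lambda>x t w i. \<Sum>j<k. f (v t) j * w j i)"

end

theory Submission
  imports Defs "HOL-Probability.Probability_Measure" "HOL-Real_Asymp.Real_Asymp"
begin

text \<open>Write S' for the epsilon-modification of S. The portfolio of the universal strategy is the
  wealth-weighted mean of the portfolios of the S'(w), so its wealth telescopes to the
  mu-average of the wealths of the S'(w) (Cover's identity). The portfolio of CRP_side is linear
  with nonnegative coefficients in the parameter, hence every parameter w' dominating (1 - a) w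
  entrywise has portfolios at least (1 - a) times those of w. For a = 1/(n+1) this holds for all
  parameters whose free coordinates lie in a box of side a/m at (1 - a) w, a box of measure
  (a/m)^(k(m-1)). As the product of the factors 1 - eps/(2(t+1)^2) over t < n and (1 - a)^n are
  both at least 1/(n+1), the average wealth is at least the wealth of S(w) divided by
  (n+1)^(k(m-1)+2) m^(k(m-1)). Taking logarithms, the growth rate of the universal strategy falls
  short of that of S(w) by O(log n / n).\<close>

section \<open>Portfolios and wealth\<close>

definition portfolio :: "nat \<Rightarrow> pvec \<Rightarrow> bool" where
  "portfolio m b \<longleftrightarrow> (\<forall>i<m. 0 \<le> b i) \<and> (\<Sum>i<m. b i) = 1"

lemma portfolio_le_1:
  assumes "portfolio m b" "i < m"
  shows "b i \<le> 1"
proof -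
  have "b i \<le> (\<Sum>i<m. b i)"
    using assms by (intro member_le_sum) (auto simp: portfolio_def)
  then show ?thesis
    using assms(1) by (simp add: portfolio_def)
qed

lemma pdot_pos:
  assumes "portfolio m b" "valid_market m x"
  shows "0 < pdot m b (x t)"
proof -
  have nonneg: "\<And>i. i < m \<Longrightarrow> 0 \<le> b i * x t i"
    using assms by (auto simp: portfolio_def valid_market_def less_imp_le)
  have "(\<Sum>i<m. b i) \<noteq> 0"
    using assms(1) by (simp add: portfolio_def)
  then obtain i where i: "i < m" "b i \<noteq> 0"
    by (blast elim: sum.not_neutral_contains_not_neutral)
  then have "0 < b i * x t i"
    using assms by (auto simp: portfolio_def valid_market_def order.order_iff_strict)
  also have "b i * x t i \<le> pdot m b (x t)"
    unfolding pdot_def using i nonneg by (intro member_le_sum) auto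
  finally show ?thesis .
qed

lemma pdot_le_sum:
  assumes "portfolio m b" "valid_market m x"
  shows "pdot m b (x t) \<le> (\<Sum>i<m. x t i)"
  unfolding pdot_def using assms
  by (intro sum_mono mult_left_le_one_le)
     (auto simp: portfolio_def valid_market_def portfolio_le_1 less_imp_le)

lemma wealth_Suc: "wealth m U x (Suc n) = wealth m U x n * pdot m (U x n) (x n)"
  by (simp add: wealth_def)

lemma wealth_pos:
  assumes "valid_market m x" "\<And>t. portfolio m (U x t)"
  shows "0 < wealth m U x n"
  unfolding wealth_def using assms by (intro prod_pos pdot_pos) auto

lemma wealth_le_prod_sum:
  assumes "valid_market m x" "\<And>t. portfolio m (U x t)"
  shows "wealth m U x n \<le> (\<Prod>t<n. \<Sum>i<m. x t i)"
  unfolding wealth_def using assms pdot_pos[OF assms(2,1)] pdot_le_sum[OF assms(2,1)]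
  by (intro prod_mono) (simp add: less_imp_le)

lemma wealth_ge_scaled:
  assumes x: "valid_market m x"
    and c: "\<And>t. 0 \<le> c t"
    and U: "\<And>t i. i < m \<Longrightarrow> 0 \<le> U x t i"
    and dom: "\<And>t i. i < m \<Longrightarrow> c t * U x t i \<le> V x t i"
  shows "(\<Prod>t<n. c t) * wealth m U x n \<le> wealth m V x n"
proof -
  have step: "0 \<le> c t * pdot m (U x t) (x t) \<and> c t * pdot m (U x t) (x t) \<le> pdot m (V x t) (x t)" for t
  proof -
    have xt: "\<And>i. i < m \<Longrightarrow> 0 \<le> x t i"
      using x by (simp add: valid_market_def less_imp_le)
    have "c t * pdot m (U x t) (x t) = (\<Sum>i<m. (c t * U x t i) * x t i)"
      by (simp add: pdot_def sum_distrib_left mult.assoc)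
    moreover have "0 \<le> (\<Sum>i<m. (c t * U x t i) * x t i)"
      using c U xt by (intro sum_nonneg mult_nonneg_nonneg) auto
    moreover have "(\<Sum>i<m. (c t * U x t i) * x t i) \<le> pdot m (V x t) (x t)"
      unfolding pdot_def using dom xt by (intro sum_mono mult_right_mono) auto
    ultimately show ?thesis
      by simp
  qed
  have "(\<Prod>t<n. c t) * wealth m U x n = (\<Prod>t<n. c t * pdot m (U x t) (x t))"
    by (simp add: wealth_def prod.distrib)
  also have "\<dots> \<le> wealth m V x n"
    unfolding wealth_def using step by (intro prod_mono) auto
  finally show ?thesis .
qed

lemma borel_measurable_wealth:
  assumes "\<And>t i. i < m \<Longrightarrow> (\<lambda>w. S x t w i) \<in> borel_measurable M"
  shows "(\<lambda>w. wealth m (fix_param S w) x n) \<in> borel_measurable M"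
  unfolding wealth_def fix_param_def pdot_def using assms
  by (intro borel_measurable_prod borel_measurable_sum borel_measurable_times) auto

section \<open>The epsilon-modification\<close>

definition mix_weight :: "real \<Rightarrow> nat \<Rightarrow> real" where
  "mix_weight \<epsilon> t = \<epsilon> / (2 * (real t + 1)^2)"

lemma eps_mod_eq:
  "eps_mod m \<epsilon> S x t w i = (1 - mix_weight \<epsilon> t) * S x t w i + mix_weight \<epsilon> t / real m"
  by (simp add: eps_mod_def mix_weight_def)

lemma mix_weight_le:
  assumes "\<epsilon> \<le> 1"
  shows "mix_weight \<epsilon> t \<le> 1 / (real t + 2)"
proof -
  have "\<epsilon> * (real t + 2) \<le> real t + 2"
    using assms by (simp add: mult_left_le_one_le)
  also have "\<dots> \<le> 2 * (real t + 1)^2"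
    by (simp add: power2_eq_square algebra_simps)
  finally have "\<epsilon> * (real t + 2) \<le> 2 * (real t + 1)^2" .
  then show ?thesis
    by (simp add: mix_weight_def field_simps)
qed

lemma mix_weight_le_1: "\<epsilon> \<le> 1 \<Longrightarrow> mix_weight \<epsilon> t \<le> 1"
  using mix_weight_le[of \<epsilon> t] order_trans[of _ "1 / (real t + 2)" 1] by simp

lemma inverse_Suc_le_power: "1 / (real n + 1) \<le> (1 - 1 / (real n + 1)) ^ n"
proof -
  have "1 + real n * (- 1 / (real n + 1)) \<le> (1 + - 1 / (real n + 1)) ^ n"
    by (rule Bernoulli_inequality) (simp add: field_simps)
  moreover have "1 + real n * (- 1 / (real n + 1)) = 1 / (real n + 1)"
    by (simp add: field_simps)
  ultimately show ?thesis
    by simp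
qed

lemma prod_one_minus_mix_weight_ge:
  assumes "\<epsilon> \<le> 1"
  shows "1 / (real n + 1) \<le> (\<Prod>t<n. 1 - mix_weight \<epsilon> t)"
proof -
  have telescope: "(\<Prod>t<n. (real t + 1) / (real t + 2)) = 1 / (real n + 1)"
    by (induction n) (auto simp: field_simps)
  have "(real t + 1) / (real t + 2) \<le> 1 - mix_weight \<epsilon> t" for t
    using mix_weight_le[OF assms, of t] by (simp add: field_simps)
  then have "(\<Prod>t<n. (real t + 1) / (real t + 2)) \<le> (\<Prod>t<n. 1 - mix_weight \<epsilon> t)"
    by (intro prod_mono) auto
  then show ?thesis
    by (simp add: telescope)
qed

lemma portfolio_eps_mod:
  assumes "0 < m" "0 \<le> \<epsilon>" "\<epsilon> \<le> 1" "portfolio m (S x t w)"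
  shows "portfolio m (eps_mod m \<epsilon> S x t w)"
proof -
  have "0 \<le> mix_weight \<epsilon> t"
    using assms(2) by (simp add: mix_weight_def)
  moreover have "mix_weight \<epsilon> t \<le> 1"
    using assms(3) by (rule mix_weight_le_1)
  moreover have "(\<Sum>i<m. eps_mod m \<epsilon> S x t w i) = (1 - mix_weight \<epsilon> t) * (\<Sum>i<m. S x t w i) + mix_weight \<epsilon> t"
    using assms(1) by (simp add: eps_mod_eq sum.distrib sum_distrib_left)
  ultimately show ?thesis
    using assms(4) by (auto simp: portfolio_def eps_mod_eq)
qed

lemma eps_mod_ge:
  assumes "0 \<le> \<epsilon>"
  shows "(1 - mix_weight \<epsilon> t) * S x t w i \<le> eps_mod m \<epsilon> S x t w i"
  using assms by (simp add: eps_mod_eq mix_weight_def)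

section \<open>The uniform measure on the parameter space\<close>

abbreviation param_borel :: "nat \<Rightarrow> nat \<Rightarrow> param measure" where
  "param_borel m k \<equiv> PiM {..<k} (\<lambda>_. PiM {..<m} (\<lambda>_. lborel))"

abbreviation coord_uniform :: "nat \<Rightarrow> nat \<Rightarrow> (nat \<times> nat \<Rightarrow> real) measure" where
  "coord_uniform m k \<equiv> uniform_measure (lebesgue_coords m k) (coord_domain m k)"

lemma sum_lessThan_split_last:
  fixes m :: nat and g :: "nat \<Rightarrow> 'a::comm_monoid_add"
  assumes "0 < m"
  shows "(\<Sum>i<m. g i) = (\<Sum>i<m - 1. g i) + g (m - 1)"
  using sum.lessThan_Suc[of g "m - 1"] assms by simp

lemma measurable_coord[measurable]: "(\<lambda>y. y p) \<in> borel_measurable (lebesgue_coords m k)"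
proof (cases "p \<in> free_coords m k")
  case True
  then show ?thesis
    unfolding lebesgue_coords_def
    by (subst measurable_lborel1[symmetric], rule measurable_component_singleton)
next
  case False
  then have "\<And>y. y \<in> space (lebesgue_coords m k) \<Longrightarrow> y p = undefined"
    by (cases p) (auto simp: lebesgue_coords_def space_PiM PiE_def extensional_def)
  then have "(\<lambda>y. y p) \<in> borel_measurable (lebesgue_coords m k) \<longleftrightarrow>
      (\<lambda>_. undefined :: real) \<in> borel_measurable (lebesgue_coords m k)"
    by (intro measurable_cong) simp
  then show ?thesis
    by simp
qed

lemma sets_coord_domain[measurable]: "coord_domain m k \<in> sets (lebesgue_coords m k)"
  unfolding coord_domain_def by measurable

lemma measurable_param_entry[measurable]: "(\<lambda>w. w j i) \<in> borel_measurable (param_borel m k)"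
proof -
  consider "j < k" "i < m" | "j < k" "\<not> i < m" | "\<not> j < k"
    by blast
  then show ?thesis
  proof cases
    case 1
    have "(\<lambda>w. w j) \<in> measurable (param_borel m k) (PiM {..<m} (\<lambda>_. lborel))"
      by (rule measurable_component_singleton) (use 1 in simp)
    then have "(\<lambda>w. (\<lambda>z. z i) (w j)) \<in> measurable (param_borel m k) lborel"
      by (rule measurable_compose[OF _ measurable_component_singleton]) (use 1 in simp)
    then show ?thesis
      by simp
  next
    case 2
    then have "\<And>w. w \<in> space (param_borel m k) \<Longrightarrow> w j i = undefined"
      by (auto simp: space_PiM PiE_def extensional_def)
    then have "(\<lambda>w. w j i) \<in> borel_measurable (param_borel m k) \<longleftrightarrow>
        (\<lambda>_. undefined :: real) \<in> borel_measurable (param_borel m k)"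
      by (intro measurable_cong) simp
    then show ?thesis
      by simp
  next
    case 3
    then have "\<And>w. w \<in> space (param_borel m k) \<Longrightarrow> w j i = undefined i"
      by (auto simp: space_PiM PiE_def extensional_def)
    then have "(\<lambda>w. w j i) \<in> borel_measurable (param_borel m k) \<longleftrightarrow>
        (\<lambda>_. undefined i :: real) \<in> borel_measurable (param_borel m k)"
      by (intro measurable_cong) simp
    then show ?thesis
      by simp
  qed
qed

lemma measurable_coords_to_param[measurable]:
  "coords_to_param m k \<in> measurable (lebesgue_coords m k) (param_borel m k)"
  unfolding coords_to_param_def
proof (intro measurable_restrict)
  fix j i
  show "(\<lambda>y. if i < m - 1 then y (j, i) else 1 - (\<Sum>i'<m - 1. y (j, i'))) \<in> measurable (lebesgue_coords m k) lborel"
    by (cases "i < m - 1") simp_all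
qed

lemma sets_paramspace[measurable]:
  "{w \<in> space (param_borel m k). w \<in> paramspace m k} \<in> sets (param_borel m k)"
proof -
  have "{w \<in> space (param_borel m k). w \<in> paramspace m k} =
      {w \<in> space (param_borel m k). \<forall>j<k. (\<forall>i<m. 0 \<le> w j i \<and> w j i \<le> 1) \<and> (\<Sum>i<m. w j i) = 1}"
    by (auto simp: paramspace_def asset_simplex_def space_PiM PiE_iff)
  also have "\<dots> \<in> sets (param_borel m k)"
    by measurable
  finally show ?thesis .
qed

lemma coords_to_param_paramspace:
  assumes "0 < m" "y \<in> coord_domain m k"
  shows "coords_to_param m k y \<in> paramspace m k"
proof -
  have "coords_to_param m k y j \<in> asset_simplex m" if j: "j < k" for j
  proof -
    let ?s = "\<Sum>i<m - 1. y (j, i)"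
    have y_nonneg: "\<And>i. i < m - 1 \<Longrightarrow> 0 \<le> y (j, i)" and s_le: "?s \<le> 1"
      using assms(2) j by (auto simp: coord_domain_def)
    have y_le: "y (j, i) \<le> ?s" if "i < m - 1" for i
      using y_nonneg that by (intro member_le_sum) auto
    have "\<And>i. i < m - 1 \<Longrightarrow> y (j, i) \<le> 1"
      using y_le s_le by (meson order_trans)
    moreover have "0 \<le> ?s"
      using y_nonneg by (intro sum_nonneg) auto
    moreover have "(\<Sum>i<m. coords_to_param m k y j i) = ?s + (1 - ?s)"
      using assms(1) j by (simp add: sum_lessThan_split_last coords_to_param_def)
    ultimately show ?thesis
      using j y_nonneg s_le by (auto simp: asset_simplex_def coords_to_param_def)
  qed
  then show ?thesis
    by (auto simp: paramspace_def coords_to_param_def)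
qed

definition coord_box :: "nat \<Rightarrow> nat \<Rightarrow> (nat \<times> nat \<Rightarrow> real) \<Rightarrow> real \<Rightarrow> (nat \<times> nat \<Rightarrow> real) set" where
  "coord_box m k lo h = PiE (free_coords m k) (\<lambda>p. {lo p .. lo p + h})"

lemma sets_coord_box[measurable]: "coord_box m k lo h \<in> sets (lebesgue_coords m k)"
  unfolding coord_box_def lebesgue_coords_def
  by (intro sets_PiM_I_finite) (auto simp: free_coords_def)

lemma emeasure_coord_box:
  assumes "0 \<le> h"
  shows "emeasure (lebesgue_coords m k) (coord_box m k lo h) = ennreal (h ^ (k * (m - 1)))"
proof -
  interpret product_sigma_finite "\<lambda>_::nat \<times> nat. lborel :: real measure"
    by standard
  have "emeasure (lebesgue_coords m k) (coord_box m k lo h)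
      = (\<Prod>p\<in>free_coords m k. emeasure lborel {lo p .. lo p + h})"
    unfolding lebesgue_coords_def coord_box_def
    by (rule emeasure_PiM) (auto simp: free_coords_def)
  also have "\<dots> = ennreal (h ^ (k * (m - 1)))"
    using assms
    by (simp add: prod_ennreal ennreal_power free_coords_def card_cartesian_product)
  finally show ?thesis .
qed

lemma measure_coord_box:
  "0 \<le> h \<Longrightarrow> measure (lebesgue_coords m k) (coord_box m k lo h) = h ^ (k * (m - 1))"
  by (simp add: measure_def emeasure_coord_box)

lemma coord_domain_subset_unit_box: "coord_domain m k \<subseteq> coord_box m k (\<lambda>_. 0) 1"
proof
  fix y assume y: "y \<in> coord_domain m k"
  have "0 \<le> y (j, i) \<and> y (j, i) \<le> 1" if "j < k" "i < m - 1" for j i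
  proof -
    have "\<forall>i<m - 1. 0 \<le> y (j, i)" "(\<Sum>i<m - 1. y (j, i)) \<le> 1"
      using y that by (auto simp: coord_domain_def)
    moreover have "y (j, i) \<le> (\<Sum>i<m - 1. y (j, i))"
      using calculation(1) that by (intro member_le_sum) auto
    ultimately show ?thesis
      using that by auto
  qed
  moreover have "y \<in> free_coords m k \<rightarrow>\<^sub>E UNIV"
    using y by (auto simp: coord_domain_def lebesgue_coords_def space_PiM)
  ultimately show "y \<in> coord_box m k (\<lambda>_. 0) 1"
    by (auto simp: coord_box_def free_coords_def PiE_iff)
qed

text \<open>The parameters in this box dominate \<open>(1 - \<alpha>) w\<close> entrywise: the free entries by
  construction, the last entry of each portfolio because the free entries exceed those of
  \<open>(1 - \<alpha>) w\<close> by at most \<open>(m - 1) \<alpha> / m \<le> \<alpha>\<close> in total.\<close>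
abbreviation shrink_box :: "nat \<Rightarrow> nat \<Rightarrow> param \<Rightarrow> real \<Rightarrow> (nat \<times> nat \<Rightarrow> real) set" where
  "shrink_box m k w \<alpha> \<equiv> coord_box m k (\<lambda>(j, i). (1 - \<alpha>) * w j i) (\<alpha> / real m)"

lemma shrink_box_sum_le:
  assumes "0 < m" "w \<in> paramspace m k" "0 \<le> \<alpha>" "y \<in> shrink_box m k w \<alpha>" "j < k"
  shows "(\<Sum>i<m - 1. y (j, i)) \<le> 1 - (1 - \<alpha>) * w j (m - 1)"
proof -
  have "real (m - 1) * \<alpha> \<le> real m * \<alpha>"
    using assms(3) by (intro mult_right_mono) auto
  then have excess: "real (m - 1) * \<alpha> / real m \<le> \<alpha>"
    using assms(1) by (simp add: divide_le_eq mult.commute)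
  have "(\<Sum>i<m - 1. y (j, i)) \<le> (\<Sum>i<m - 1. (1 - \<alpha>) * w j i + \<alpha> / real m)"
    using assms(4,5) by (intro sum_mono) (auto simp: coord_box_def free_coords_def PiE_iff)
  also have "\<dots> = (1 - \<alpha>) * (\<Sum>i<m - 1. w j i) + real (m - 1) * \<alpha> / real m"
    by (simp add: sum.distrib sum_distrib_left)
  also have "(\<Sum>i<m - 1. w j i) = 1 - w j (m - 1)"
    using assms(2,5) sum_lessThan_split_last[OF assms(1), of "w j"]
    by (simp add: paramspace_def asset_simplex_def PiE_iff)
  finally have "(\<Sum>i<m - 1. y (j, i)) \<le> (1 - \<alpha>) * (1 - w j (m - 1)) + \<alpha>"
    using excess by linarith
  then show ?thesis
    by (simp add: algebra_simps)
qed

lemma shrink_box_subset_coord_domain: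
  assumes "0 < m" "w \<in> paramspace m k" "0 \<le> \<alpha>" "\<alpha> \<le> 1"
  shows "shrink_box m k w \<alpha> \<subseteq> coord_domain m k"
proof
  fix y assume y: "y \<in> shrink_box m k w \<alpha>"
  have w: "\<And>j i. j < k \<Longrightarrow> i < m \<Longrightarrow> 0 \<le> w j i \<and> w j i \<le> 1"
    using assms(2) by (auto simp: paramspace_def asset_simplex_def PiE_iff)
  have "0 \<le> y (j, i)" if "j < k" "i < m - 1" for j i
  proof -
    have "(1 - \<alpha>) * w j i \<le> y (j, i)"
      using y that by (auto simp: coord_box_def free_coords_def PiE_iff)
    moreover have "0 \<le> (1 - \<alpha>) * w j i"
      using w that assms(4) by simp
    ultimately show ?thesis
      by linarith
  qed
  moreover have "(\<Sum>i<m - 1. y (j, i)) \<le> 1" if "j < k" for j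
  proof -
    have "0 \<le> (1 - \<alpha>) * w j (m - 1)"
      using w[OF that, of "m - 1"] assms(1,4) by simp
    then show ?thesis
      using shrink_box_sum_le[OF assms(1-3) y that] by linarith
  qed
  moreover have "y \<in> space (lebesgue_coords m k)"
    using y by (auto simp: coord_box_def lebesgue_coords_def space_PiM PiE_iff)
  ultimately show "y \<in> coord_domain m k"
    by (auto simp: coord_domain_def)
qed

lemma coords_to_param_shrink_box_ge:
  assumes "0 < m" "w \<in> paramspace m k" "0 \<le> \<alpha>" "y \<in> shrink_box m k w \<alpha>" "j < k" "i < m"
  shows "(1 - \<alpha>) * w j i \<le> coords_to_param m k y j i"
proof (cases "i < m - 1")
  case True
  then show ?thesis
    using assms(4-6) by (auto simp: coords_to_param_def coord_box_def free_coords_def PiE_iff)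
next
  case False
  then have "i = m - 1"
    using assms(6) by simp
  then show ?thesis
    using shrink_box_sum_le[OF assms(1-5)] assms(5,6) by (simp add: coords_to_param_def)
qed

lemma paramspace_nonempty:
  assumes "0 < m"
  shows "paramspace m k \<noteq> {}"
proof -
  have "(\<lambda>j\<in>{..<k}. \<lambda>i\<in>{..<m}. if i = 0 then 1 else 0) \<in> paramspace m k"
    using assms by (auto simp: paramspace_def asset_simplex_def)
  then show ?thesis
    by blast
qed

lemma emeasure_coord_domain:
  assumes "0 < m"
  shows "emeasure (lebesgue_coords m k) (coord_domain m k) \<noteq> 0"
    and "emeasure (lebesgue_coords m k) (coord_domain m k) \<le> 1"
proof -
  obtain w where w: "w \<in> paramspace m k"
    using paramspace_nonempty[OF assms] by blast
  have "ennreal ((1 / real m) ^ (k * (m - 1))) = emeasure (lebesgue_coords m k) (shrink_box m k w 1)"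
    by (simp add: emeasure_coord_box)
  also have "\<dots> \<le> emeasure (lebesgue_coords m k) (coord_domain m k)"
    using shrink_box_subset_coord_domain[OF assms w, of 1] by (intro emeasure_mono) auto
  finally have "ennreal ((1 / real m) ^ (k * (m - 1))) \<le> emeasure (lebesgue_coords m k) (coord_domain m k)" .
  moreover have "0 < ennreal ((1 / real m) ^ (k * (m - 1)))"
    using assms by simp
  ultimately show "emeasure (lebesgue_coords m k) (coord_domain m k) \<noteq> 0"
    by auto
  have "emeasure (lebesgue_coords m k) (coord_domain m k) \<le> emeasure (lebesgue_coords m k) (coord_box m k (\<lambda>_. 0) 1)"
    using coord_domain_subset_unit_box by (intro emeasure_mono) auto
  then show "emeasure (lebesgue_coords m k) (coord_domain m k) \<le> 1"
    by (simp add: emeasure_coord_box)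
qed

lemma prob_space_coord_uniform: "0 < m \<Longrightarrow> prob_space (coord_uniform m k)"
  using emeasure_coord_domain[of m k]
  by (intro prob_space_uniform_measure) (auto simp: top_unique)

lemma measurable_coords_to_param_uniform[measurable]:
  "coords_to_param m k \<in> measurable (coord_uniform m k) (param_borel m k)"
  using measurable_coords_to_param by (simp cong: measurable_cong_sets)

lemma prob_space_param_measure: "0 < m \<Longrightarrow> prob_space (param_measure m k)"
  unfolding param_measure_def
  by (rule prob_space.prob_space_distr[OF prob_space_coord_uniform measurable_coords_to_param_uniform])

lemma AE_param_measure_paramspace:
  assumes "0 < m"
  shows "AE w in param_measure m k. w \<in> paramspace m k"
proof -
  have "AE y in coord_uniform m k. coords_to_param m k y \<in> paramspace m k"
    by (rule AE_uniform_measureI[OF sets_coord_domain])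
       (auto intro!: AE_I2 coords_to_param_paramspace[OF assms])
  then show ?thesis
    unfolding param_measure_def
    using AE_distr_iff[OF measurable_coords_to_param_uniform sets_paramspace] by simp
qed

lemma integrable_param_measure_bounded:
  fixes g :: "param \<Rightarrow> real"
  assumes "0 < m" "g \<in> borel_measurable (param_borel m k)"
    and "\<And>w. w \<in> paramspace m k \<Longrightarrow> \<bar>g w\<bar> \<le> B"
  shows "integrable (param_measure m k) g"
proof -
  interpret prob_space "param_measure m k"
    by (rule prob_space_param_measure[OF assms(1)])
  show ?thesis
  proof (rule integrable_const_bound[where B = B])
    show "AE w in param_measure m k. norm (g w) \<le> B"
      using AE_param_measure_paramspace[OF assms(1)] by eventually_elim (use assms(3) in auto)
    show "g \<in> borel_measurable (param_measure m k)"
      using assms(2) by (simp add: param_measure_def)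
  qed
qed

text \<open>In the free coordinates \<open>\<mu>\<close> has density \<open>1 / measure (coord_domain m k) \<ge> 1\<close>.\<close>
lemma integral_param_measure_ge:
  assumes m: "0 < m"
    and g: "g \<in> borel_measurable (param_borel m k)" "integrable (param_measure m k) g"
    and g_nonneg: "\<And>w. w \<in> paramspace m k \<Longrightarrow> 0 \<le> g w"
    and A: "A \<in> sets (lebesgue_coords m k)" "A \<subseteq> coord_domain m k"
    and c: "0 \<le> c" "\<And>y. y \<in> A \<Longrightarrow> c \<le> g (coords_to_param m k y)"
  shows "c * measure (lebesgue_coords m k) A \<le> (\<integral>w. g w \<partial>param_measure m k)"
proof -
  let ?L = "lebesgue_coords m k" and ?D = "coord_domain m k" and ?\<nu> = "coord_uniform m k"
  interpret prob_space ?\<nu>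
    by (rule prob_space_coord_uniform[OF m])
  have D: "emeasure ?L ?D \<noteq> 0" "emeasure ?L ?D \<noteq> \<infinity>" "measure ?L ?D \<le> 1"
    using emeasure_coord_domain[OF m, of k] by (auto simp: top_unique measure_def intro: enn2real_leI)
  then have "0 < measure ?L ?D"
    by (simp add: emeasure_eq_ennreal_measure zero_less_measure_iff)
  have int: "integrable ?\<nu> (\<lambda>y. g (coords_to_param m k y))"
    using g by (simp add: param_measure_def integrable_distr_eq)
  have "c * measure ?L A \<le> c * (measure ?L A / measure ?L ?D)"
    using D \<open>0 < measure ?L ?D\<close> c(1) by (intro mult_left_mono) (auto simp: le_divide_eq mult_left_le)
  also have "\<dots> = (\<integral>y. c * indicator A y \<partial>?\<nu>)"
    using A D by (simp add: Int_absorb1)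
  also have "\<dots> \<le> (\<integral>y. g (coords_to_param m k y) \<partial>?\<nu>)"
  proof (rule integral_mono_AE[OF _ int])
    show "integrable ?\<nu> (\<lambda>y. c * indicator A y)"
    proof (intro integrable_mult_right integrable_real_indicator)
      show "A \<in> sets ?\<nu>"
        using A(1) by simp
      show "emeasure ?\<nu> A < \<infinity>"
        using emeasure_finite[of A] by (metis infinity_ennreal_def top.not_eq_extremum)
    qed
    show "AE y in ?\<nu>. c * indicator A y \<le> g (coords_to_param m k y)"
      using A c g_nonneg coords_to_param_paramspace[OF m]
      by (intro AE_uniform_measureI AE_I2) (auto split: split_indicator)
  qed
  also have "\<dots> = (\<integral>w. g w \<partial>param_measure m k)"
    using g by (simp add: param_measure_def integral_distr)
  finally show ?thesis .
qed

lemma (in prob_space) integral_pos_AE: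
  fixes f :: "'a \<Rightarrow> real"
  assumes "integrable M f" "AE x in M. 0 < f x"
  shows "0 < (\<integral>x. f x \<partial>M)"
proof -
  have nonneg: "AE x in M. 0 \<le> f x"
    using assms(2) by eventually_elim simp
  have "\<not> (AE x in M. f x = 0)"
  proof
    assume "AE x in M. f x = 0"
    with assms(2) have "AE x in M. False"
      by eventually_elim simp
    then show False
      by simp
  qed
  then show ?thesis
    using integral_nonneg_AE[OF nonneg] integral_nonneg_eq_0_iff_AE[OF assms(1) nonneg]
    by linarith
qed

section \<open>Universalizability of shrink-monotone strategies\<close>

locale portfolio_strategy =
  fixes m k :: nat and S :: pstrategy
  assumes m_pos: "0 < m"
    and measurable_S: "\<And>x t i. i < m \<Longrightarrow> (\<lambda>w. S x t w i) \<in> borel_measurable (param_borel m k)"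
    and portfolio_S: "\<And>x t w. w \<in> paramspace m k \<Longrightarrow> portfolio m (S x t w)"
begin

lemma borel_measurable_param_wealth:
  "(\<lambda>w. wealth m (fix_param S w) x n) \<in> borel_measurable (param_borel m k)"
  by (rule borel_measurable_wealth) (rule measurable_S)

lemma param_wealth_bounds:
  assumes "valid_market m x" "w \<in> paramspace m k"
  shows "0 < wealth m (fix_param S w) x n" "wealth m (fix_param S w) x n \<le> (\<Prod>t<n. \<Sum>i<m. x t i)"
  using assms portfolio_S
  by (auto simp: fix_param_def intro!: wealth_pos wealth_le_prod_sum)

lemma integrable_share_wealth:
  assumes "valid_market m x" "i < m"
  shows "integrable (param_measure m k) (\<lambda>w. S x t w i * wealth m (fix_param S w) x n)"
proof (rule integrable_param_measure_bounded[OF m_pos])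
  show "(\<lambda>w. S x t w i * wealth m (fix_param S w) x n) \<in> borel_measurable (param_borel m k)"
    using measurable_S[OF assms(2)] borel_measurable_param_wealth by (rule borel_measurable_times)
  fix w assume w: "w \<in> paramspace m k"
  have "0 \<le> S x t w i" "S x t w i \<le> 1"
    using portfolio_S[OF w] assms(2) portfolio_le_1[OF portfolio_S[OF w] assms(2)]
    by (auto simp: portfolio_def)
  moreover note param_wealth_bounds[OF assms(1) w, of n]
  ultimately have "\<bar>S x t w i * wealth m (fix_param S w) x n\<bar> \<le> wealth m (fix_param S w) x n"
    by (simp add: abs_mult mult_left_le_one_le)
  then show "\<bar>S x t w i * wealth m (fix_param S w) x n\<bar> \<le> (\<Prod>t<n. \<Sum>i<m. x t i)"
    using param_wealth_bounds[OF assms(1) w, of n] by linarith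
qed

lemma integrable_param_wealth:
  assumes "valid_market m x"
  shows "integrable (param_measure m k) (\<lambda>w. wealth m (fix_param S w) x n)"
  using param_wealth_bounds[OF assms]
  by (intro integrable_param_measure_bounded[OF m_pos borel_measurable_param_wealth,
        where B = "\<Prod>t<n. \<Sum>i<m. x t i"]) (auto simp: abs_of_pos)

lemma average_wealth_pos:
  assumes "valid_market m x"
  shows "0 < (\<integral>w. wealth m (fix_param S w) x n \<partial>param_measure m k)"
proof (rule prob_space.integral_pos_AE[OF prob_space_param_measure[OF m_pos]])
  show "integrable (param_measure m k) (\<lambda>w. wealth m (fix_param S w) x n)"
    by (rule integrable_param_wealth[OF assms])
  show "AE w in param_measure m k. 0 < wealth m (fix_param S w) x n"
    using AE_param_measure_paramspace[OF m_pos] by eventually_elim (use param_wealth_bounds[OF assms] in auto)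
qed

lemma wealth_univ:
  assumes x: "valid_market m x"
  shows "wealth m (univ m k S) x n = (\<integral>w. wealth m (fix_param S w) x n \<partial>param_measure m k)"
proof (induction n)
  case 0
  interpret prob_space "param_measure m k"
    by (rule prob_space_param_measure[OF m_pos])
  show ?case
    using prob_space by (simp add: wealth_def)
next
  case (Suc n)
  let ?W = "\<lambda>n w. wealth m (fix_param S w) x n"
  have "pdot m (univ m k S x n) (x n)
      = (\<Sum>i<m. (\<integral>w. S x n w i * ?W n w * x n i \<partial>param_measure m k)) / (\<integral>w. ?W n w \<partial>param_measure m k)"
    by (simp add: pdot_def univ_def sum_divide_distrib)
  also have "(\<Sum>i<m. (\<integral>w. S x n w i * ?W n w * x n i \<partial>param_measure m k))
      = (\<integral>w. (\<Sum>i<m. S x n w i * ?W n w * x n i) \<partial>param_measure m k)"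
    using integrable_share_wealth[OF x]
    by (intro Bochner_Integration.integral_sum[symmetric] integrable_mult_left) auto
  also have "\<dots> = (\<integral>w. ?W (Suc n) w \<partial>param_measure m k)"
    by (intro Bochner_Integration.integral_cong)
       (simp_all add: wealth_Suc pdot_def fix_param_def sum_distrib_left mult_ac)
  finally show ?case
    using Suc average_wealth_pos[OF x, of n] by (simp add: wealth_Suc)
qed

lemma portfolio_strategy_eps_mod:
  assumes "0 \<le> \<epsilon>" "\<epsilon> \<le> 1"
  shows "portfolio_strategy m k (eps_mod m \<epsilon> S)"
proof
  show "\<And>x t i. i < m \<Longrightarrow> (\<lambda>w. eps_mod m \<epsilon> S x t w i) \<in> borel_measurable (param_borel m k)"
    unfolding eps_mod_def using measurable_S by measurable
  show "\<And>x t w. w \<in> paramspace m k \<Longrightarrow> portfolio m (eps_mod m \<epsilon> S x t w)"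
    using portfolio_eps_mod[OF m_pos assms] portfolio_S by blast
qed (rule m_pos)

end

definition regret_bound :: "nat \<Rightarrow> nat \<Rightarrow> nat \<Rightarrow> real" where
  "regret_bound m k n =
     (real (k * (m - 1) + 2) * ln (real n + 1) + real (k * (m - 1)) * ln (real m)) / real n"

lemma regret_bound_tendsto: "regret_bound m k \<longlonglongrightarrow> 0"
  unfolding regret_bound_def by real_asymp

locale shrink_monotone_strategy = portfolio_strategy +
  assumes shrink_monotone:
    "\<And>x t w w' c i. w \<in> paramspace m k \<Longrightarrow> w' \<in> paramspace m k \<Longrightarrow> 0 \<le> c \<Longrightarrow>
       (\<forall>j<k. \<forall>i<m. c * w j i \<le> w' j i) \<Longrightarrow> i < m \<Longrightarrow> c * S x t w i \<le> S x t w' i"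
begin

lemma eps_mod_wealth_ge_on_shrink_box:
  assumes x: "valid_market m x" and \<epsilon>: "0 \<le> \<epsilon>" "\<epsilon> \<le> 1" and w: "w \<in> paramspace m k"
    and y: "y \<in> shrink_box m k w (1 / (real n + 1))"
  shows "(1 / (real n + 1))^2 * wealth m (fix_param S w) x n
    \<le> wealth m (fix_param (eps_mod m \<epsilon> S) (coords_to_param m k y)) x n"
proof -
  define \<alpha> where "\<alpha> = 1 / (real n + 1)"
  let ?w' = "coords_to_param m k y"
  have \<alpha>: "0 \<le> \<alpha>" "\<alpha> \<le> 1"
    by (auto simp: \<alpha>_def)
  have y': "y \<in> shrink_box m k w \<alpha>"
    using y by (simp add: \<alpha>_def)
  have w': "?w' \<in> paramspace m k"
    using shrink_box_subset_coord_domain[OF m_pos w \<alpha>] y' by (auto intro: coords_to_param_paramspace[OF m_pos])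
  have mix: "0 \<le> 1 - mix_weight \<epsilon> t" for t
    using mix_weight_le_1[OF \<epsilon>(2), of t] by simp
  have dom: "((1 - mix_weight \<epsilon> t) * (1 - \<alpha>)) * S x t w i \<le> eps_mod m \<epsilon> S x t ?w' i"
    if i: "i < m" for t i
  proof -
    have "(1 - \<alpha>) * S x t w i \<le> S x t ?w' i"
      using coords_to_param_shrink_box_ge[OF m_pos w \<alpha>(1) y'] \<alpha>(2)
      by (intro shrink_monotone[OF w w' _ _ i]) auto
    then have "(1 - mix_weight \<epsilon> t) * ((1 - \<alpha>) * S x t w i) \<le> (1 - mix_weight \<epsilon> t) * S x t ?w' i"
      using mix by (rule mult_left_mono)
    also have "\<dots> \<le> eps_mod m \<epsilon> S x t ?w' i"
      by (rule eps_mod_ge[OF \<epsilon>(1)])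
    finally show ?thesis
      by (simp add: mult.assoc)
  qed
  have "(\<Prod>t<n. (1 - mix_weight \<epsilon> t) * (1 - \<alpha>)) * wealth m (fix_param S w) x n
      \<le> wealth m (fix_param (eps_mod m \<epsilon> S) ?w') x n"
    using x mix \<alpha> dom portfolio_S[OF w]
    by (intro wealth_ge_scaled) (auto simp: fix_param_def portfolio_def)
  moreover have "(1 / (real n + 1))^2 \<le> (\<Prod>t<n. (1 - mix_weight \<epsilon> t) * (1 - \<alpha>))"
  proof -
    have "1 / (real n + 1) * (1 / (real n + 1)) \<le> (\<Prod>t<n. 1 - mix_weight \<epsilon> t) * (1 - \<alpha>) ^ n"
      using prod_one_minus_mix_weight_ge[OF \<epsilon>(2)] inverse_Suc_le_power[of n] mix
      by (intro mult_mono) (auto simp: \<alpha>_def intro: prod_nonneg)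
    then show ?thesis
      by (simp add: prod.distrib power2_eq_square)
  qed
  moreover have "0 \<le> wealth m (fix_param S w) x n"
    using param_wealth_bounds(1)[OF x w] by (rule less_imp_le)
  ultimately show ?thesis
    by (meson mult_right_mono order_trans)
qed

lemma wealth_le_average_eps_mod:
  assumes x: "valid_market m x" and \<epsilon>: "0 \<le> \<epsilon>" "\<epsilon> \<le> 1" and w: "w \<in> paramspace m k"
  shows "wealth m (fix_param S w) x n
    \<le> (real n + 1) ^ (k * (m - 1) + 2) * real m ^ (k * (m - 1)) *
       (\<integral>w'. wealth m (fix_param (eps_mod m \<epsilon> S) w') x n \<partial>param_measure m k)"
proof -
  interpret eps: portfolio_strategy m k "eps_mod m \<epsilon> S"
    by (rule portfolio_strategy_eps_mod[OF \<epsilon>])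
  define \<alpha> where "\<alpha> = 1 / (real n + 1)"
  define K where "K = (real n + 1) ^ (k * (m - 1) + 2) * real m ^ (k * (m - 1))"
  let ?W = "wealth m (fix_param S w) x n"
  have \<alpha>: "0 \<le> \<alpha>" "\<alpha> \<le> 1"
    by (auto simp: \<alpha>_def)
  let ?c = "(1 / (real n + 1))^2" and ?M = "measure (lebesgue_coords m k) (shrink_box m k w \<alpha>)"
  have "?c * ?W * ?M \<le> (\<integral>w'. wealth m (fix_param (eps_mod m \<epsilon> S) w') x n \<partial>param_measure m k)"
  proof (rule integral_param_measure_ge[OF m_pos eps.borel_measurable_param_wealth
        eps.integrable_param_wealth[OF x]])
    show "shrink_box m k w \<alpha> \<subseteq> coord_domain m k"
      by (rule shrink_box_subset_coord_domain[OF m_pos w \<alpha>])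
    show "0 \<le> ?c * ?W"
      using param_wealth_bounds(1)[OF x w] by (simp add: less_imp_le)
    show "\<And>y. y \<in> shrink_box m k w \<alpha> \<Longrightarrow>
        ?c * ?W \<le> wealth m (fix_param (eps_mod m \<epsilon> S) (coords_to_param m k y)) x n"
      using eps_mod_wealth_ge_on_shrink_box[OF x \<epsilon> w] by (simp add: \<alpha>_def)
  qed (use eps.param_wealth_bounds(1)[OF x] in \<open>auto intro: less_imp_le\<close>)
  moreover have "?c * ?W * ?M = ?W / K"
    using \<alpha> by (simp add: measure_coord_box \<alpha>_def K_def power_add power_mult_distrib power_one_over
        power2_eq_square mult_ac)
  moreover have "0 < K"
    using m_pos by (simp add: K_def)
  ultimately show ?thesis
    unfolding K_def[symmetric] by (simp add: pos_divide_le_eq mult.commute)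
qed

lemma growth_ge:
  assumes x: "valid_market m x" and \<epsilon>: "0 \<le> \<epsilon>" "\<epsilon> \<le> 1" and w: "w \<in> paramspace m k"
    and n: "1 \<le> n"
  shows "growth m (fix_param S w) x n - regret_bound m k n \<le> growth m (univ m k (eps_mod m \<epsilon> S)) x n"
proof -
  interpret eps: portfolio_strategy m k "eps_mod m \<epsilon> S"
    by (rule portfolio_strategy_eps_mod[OF \<epsilon>])
  define d where "d = k * (m - 1)"
  let ?W = "wealth m (fix_param S w) x n"
  let ?A = "\<integral>w'. wealth m (fix_param (eps_mod m \<epsilon> S) w') x n \<partial>param_measure m k"
  have pos: "0 < ?W" "0 < ?A"
    using param_wealth_bounds(1)[OF x w] eps.average_wealth_pos[OF x] by auto
  have "ln ?W \<le> ln ((real n + 1) ^ (d + 2) * real m ^ d * ?A)"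
    using wealth_le_average_eps_mod[OF x \<epsilon> w, of n] pos m_pos by (simp add: d_def)
  also have "\<dots> = ln ((real n + 1) ^ (d + 2)) + ln (real m ^ d) + ln ?A"
    using pos m_pos by (simp add: ln_mult)
  also have "\<dots> = real (d + 2) * ln (real n + 1) + real d * ln (real m) + ln ?A"
    by (simp only: ln_realpow)
  finally have "ln ?W - (real (d + 2) * ln (real n + 1) + real d * ln (real m)) \<le> ln ?A"
    by simp
  then have "(ln ?W - (real (d + 2) * ln (real n + 1) + real d * ln (real m))) / real n \<le> ln ?A / real n"
    by (rule divide_right_mono) simp
  then show ?thesis
    by (simp add: growth_def regret_bound_def eps.wealth_univ[OF x] d_def diff_divide_distrib)
qed

theorem universalizable: "universalizable m k S"
  unfolding universalizable_def universalization_def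
proof (intro allI impI)
  fix \<epsilon> :: real
  assume "0 < \<epsilon> \<and> \<epsilon> < 1"
  then show "\<exists>\<eta>. \<eta> \<longlonglongrightarrow> 0 \<and> (\<forall>n\<ge>1. \<forall>x. valid_market m x \<longrightarrow> (\<forall>w\<in>paramspace m k.
      growth m (fix_param S w) x n - \<eta> n \<le> growth m (univ m k (eps_mod m \<epsilon> S)) x n))"
    using regret_bound_tendsto growth_ge by (intro exI[of _ "regret_bound m k"]) auto
qed

end

section \<open>Constantly rebalanced portfolios\<close>

lemma shrink_monotone_strategy_CRP_side:
  assumes m: "0 < m" and f_nonneg: "\<forall>z. \<forall>j<k. 0 \<le> f z j" and f_sum: "\<forall>z. (\<Sum>j<k. f z j) = 1"
  shows "shrink_monotone_strategy m k (CRP_side k v f)"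
proof
  show "0 < m"
    by (rule m)
  show "(\<lambda>w. CRP_side k v f x t w i) \<in> borel_measurable (param_borel m k)" for x t i
    unfolding CRP_side_def by measurable
  show "portfolio m (CRP_side k v f x t w)" if w: "w \<in> paramspace m k" for x t w
  proof -
    have w_nonneg: "\<And>j i. j < k \<Longrightarrow> i < m \<Longrightarrow> 0 \<le> w j i"
      and w_sum: "\<And>j. j < k \<Longrightarrow> (\<Sum>i<m. w j i) = 1"
      using w by (auto simp: paramspace_def asset_simplex_def)
    have "(\<Sum>i<m. CRP_side k v f x t w i) = (\<Sum>j<k. f (v t) j * (\<Sum>i<m. w j i))"
      by (simp add: CRP_side_def sum_distrib_left sum.swap[of _ "{..<m}"])
    also have "\<dots> = (\<Sum>j<k. f (v t) j)"
      using w_sum by simp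
    also have "\<dots> = 1"
      using f_sum by simp
    finally show ?thesis
      using f_nonneg w_nonneg by (auto simp: portfolio_def CRP_side_def intro!: sum_nonneg)
  qed
  show "c * CRP_side k v f x t w i \<le> CRP_side k v f x t w' i"
    if "\<forall>j<k. \<forall>i<m. c * w j i \<le> w' j i" "i < m" for x t w w' c i
    unfolding CRP_side_def sum_distrib_left
  proof (intro sum_mono)
    fix j assume "j \<in> {..<k}"
    then have "f (v t) j * (c * w j i) \<le> f (v t) j * w' j i"
      using that f_nonneg by (intro mult_left_mono) auto
    then show "c * (f (v t) j * w j i) \<le> f (v t) j * w' j i"
      by (simp add: mult.left_commute)
  qed
qed

lemma CRP_eq_CRP_side: "CRP = CRP_side 1 v (\<lambda>_ _. 1)"
  by (simp add: CRP_def CRP_side_def fun_eq_iff)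

theorem mainTheorem8:
  fixes m :: nat
  assumes "m \<ge> 2"
  shows "universalizable m 1 CRP \<and>
         (\<forall>(k::nat) (v :: nat \<Rightarrow> real^'q::finite) (f :: real^'q \<Rightarrow> nat \<Rightarrow> real).
            k \<ge> 1 \<longrightarrow> (\<forall>z. \<forall>j<k. 0 \<le> f z j \<and> f z j \<le> 1) \<longrightarrow> (\<forall>z. (\<Sum>j<k. f z j) = 1) \<longrightarrow>
            universalizable m k (CRP_side k v f))"
proof
  have m: "0 < m"
    using assms by simp
  have "universalizable m 1 (CRP_side 1 (\<lambda>_. 0 :: real^'q) (\<lambda>_ _. 1))"
    by (intro shrink_monotone_strategy.universalizable shrink_monotone_strategy_CRP_side m) auto
  then show "universalizable m 1 CRP"
    by (simp only: CRP_eq_CRP_side[of "\<lambda>_. 0 :: real^'q"])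
  show "\<forall>(k::nat) (v :: nat \<Rightarrow> real^'q::finite) (f :: real^'q \<Rightarrow> nat \<Rightarrow> real).
            k \<ge> 1 \<longrightarrow> (\<forall>z. \<forall>j<k. 0 \<le> f z j \<and> f z j \<le> 1) \<longrightarrow> (\<forall>z. (\<Sum>j<k. f z j) = 1) \<longrightarrow>
            universalizable m k (CRP_side k v f)"
    using m by (auto intro!: shrink_monotone_strategy.universalizable shrink_monotone_strategy_CRP_side)
qed

end
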